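(* Let $(i^*_k,j^*_k)$ and $\mu_k$, $k=1,\dots,n$, be a sequence of $k$-th order bottleneck edges and robustness margins for the weights $w_{i,j}=d(p_i(0),g_j)$, and let $\Pi^*$ be a sequential bottleneck optimising assignment for this sequence. Let $\mu=\min_{k\in\{1,\dots,n\}}\mu_k$ and suppose there is $s$ with $s\ge s_{i,i'}$ for all distinct $i,i'\in\mathcal A$ and $s<\mu$. Define $A_k=\min_{l\in\{1,\dots,k\}}\big(w_{i^*_l,j^*_l}+\mu_l\big)-\tfrac12(\mu+s)$ for $k=1,\dots,n$. Let $a:[0,T]\to\mathbb R$ satisfy $a(t)\ge\tfrac12(\mu-s)$ for all $t$. Set $a_{i^*_k}(t)=\min\{a(t),A_k\}$ for $k=1,\dots,n$, $a_{i'}(t)=a_{i^*_n}(t)$ for every $i'\in\mathcal A\setminus\{i^*_1,\dots,i^*_n\}$, and $b_{j^*_k}(t)=A_k-a_{i^*_k}(t)+\tfrac12(\mu-s)$ for $k=1,\dots,n$. Suppose that for all $t\in[0,T]$: $d(p_i(0),p_i(t))<a_i(t)$ for every $i\in\mathcal A$, and $d(p_{i^*_k}(t),g_{j^*_k})<b_{j^*_k}(t)$ for every $k\in\{1,\dots,n\}$. Then for every $k\in\{1,\dots,n\}$, every $i'\in\mathcal A\setminus\{i^*_k\}$ and every $t\in[0,T]$, agents $i^*_k$ and $i'$ do not collide at time $t$, i.e. $d(p_{i^*_k}(t),p_{i'}(t))>s_{i^*_k,i'}$.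
   Context: Let $\mathcal A$ be a finite set of agents with $|\mathcal A|=m>1$ and $\mathcal T$ a finite set of tasks with $m\ge|\mathcal T|=n\ge 1$. Let $d:\mathbb R^{n_p}\times\mathbb R^{n_p}\to[0,\infty)$ be a distance function that is symmetric and satisfies the triangle inequality. Each agent $i\in\mathcal A$ has a position $p_i(t)\in\mathbb R^{n_p}$ for $t\in[0,T]$, each task $j\in\mathcal T$ has a destination $g_j\in\mathbb R^{n_p}$, and for $i\ne i'$ a safety distance $s_{i,i'}=s_{i',i}\ge 0$ is given; agents $i\ne i'$ do not collide at time $t$ if $d(p_i(t),p_{i'}(t))>s_{i,i'}$. The assignment weights are $\mathcal W=\{w_{i,j}=d(p_i(0),g_j)\}$. An assignment is a family $\Pi=\{\pi_{i,j}\in\{0,1\}:(i,j)\in\mathcal A\times\mathcal T\}$. For $\bar{\mathcal A}\subseteq\mathcal A$, $\bar{\mathcal T}\subseteq\mathcal T$ and $\hat{\mathcal E}\subseteq\bar{\mathcal A}\times\bar{\mathcal T}$, $\mathcal P_{\bar{\mathcal A},\bar{\mathcal T}}(\hat{\mathcal E})$ is the set of assignments with $\sum_{i:(i,j)\in\hat{\mathcal E}}\pi_{i,j}=1$ for every $j\in\bar{\mathcal T}$ and $\sum_{j:(i,j)\in\hat{\mathcal E}}\pi_{i,j}\le 1$ for every $i\in\bar{\mathcal A}$. Define $b(\Pi,\hat{\mathcal E})=\max_{(i,j)\in\hat{\mathcal E}}\pi_{i,j}w_{i,j}$; $B_{\bar{\mathcal A},\bar{\mathcal T}}(\hat{\mathcal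 E})=\min_{\Pi\in\mathcal P_{\bar{\mathcal A},\bar{\mathcal T}}(\hat{\mathcal E})}b(\Pi,\hat{\mathcal E})$ (with $\min\emptyset=+\infty$); $\mathcal B_{\bar{\mathcal A},\bar{\mathcal T}}(\hat{\mathcal E})$ the set of minimisers; $E_{\bar{\mathcal A},\bar{\mathcal T}}(\hat{\mathcal E})=\{(i,j)\in\hat{\mathcal E}: w_{i,j}=B_{\bar{\mathcal A},\bar{\mathcal T}}(\hat{\mathcal E})\}$. For $\bar{\mathcal E}=\bar{\mathcal A}\times\bar{\mathcal T}$ with $|\bar{\mathcal E}|>1$: $e_{\bar{\mathcal A},\bar{\mathcal T}}=\arg\max_{(i,j)\in E_{\bar{\mathcal A},\bar{\mathcal T}}(\bar{\mathcal E})}B_{\bar{\mathcal A},\bar{\mathcal T}}(\bar{\mathcal E}\setminus\{(i,j)\})$ and $r_{\bar{\mathcal A},\bar{\mathcal T}}=\max_{(i,j)\in E_{\bar{\mathcal A},\bar{\mathcal T}}(\bar{\mathcal E})}\big(B_{\bar{\mathcal A},\bar{\mathcal T}}(\bar{\mathcal E}\setminus\{(i,j)\})-w_{i,j}\big)$; if $|\bar{\mathcal E}|=1$, $e_{\bar{\mathcal A},\bar{\mathcal T}}=\bar{\mathcal E}$ and $r_{\bar{\mathcal A},\bar{\mathcal T}}=\infty$. Sequential bottleneck assignment: $\bar{\mathcal A}_1=\mathcal A$, $\bar{\mathcal T}_1=\mathcal T$; for $k=1,\dots,n$, $\bar{\mathcal E}_k=\bar{\mathcal A}_k\times\bar{\mathcal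 T}_k$, choose $(i^*_k,j^*_k)\in e_{\bar{\mathcal A}_k,\bar{\mathcal T}_k}$, set $\mu_k=r_{\bar{\mathcal A}_k,\bar{\mathcal T}_k}$, $\bar{\mathcal A}_{k+1}=\bar{\mathcal A}_k\setminus\{i^*_k\}$, $\bar{\mathcal T}_{k+1}=\bar{\mathcal T}_k\setminus\{j^*_k\}$. Given these choices, $\Pi^*$ is sequential bottleneck optimising if $\Pi^*\in\mathcal B_{\bar{\mathcal A}_k,\bar{\mathcal T}_k}(\bar{\mathcal E}_k)$ for all $k$. *)

theory Defs
  imports "HOL-Analysis.Analysis" "HOL-Library.Extended_Real"
begin

definition assignments :: "'a set \<Rightarrow> 'b set \<Rightarrow> ('a \<times> 'b) set \<Rightarrow> ('a \<Rightarrow> 'b \<Rightarrow> nat) set" where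
  "assignments Ab Tb Eh = {asg. (\<forall>i j. asg i j \<in> {0,1})
      \<and> (\<forall>j\<in>Tb. (\<Sum>i\<in>{i. (i,j)\<in>Eh}. asg i j) = 1)
      \<and> (\<forall>i\<in>Ab. (\<Sum>j\<in>{j. (i,j)\<in>Eh}. asg i j) \<le> 1)}"

definition bval :: "('a \<Rightarrow> 'b \<Rightarrow> real) \<Rightarrow> ('a \<Rightarrow> 'b \<Rightarrow> nat) \<Rightarrow> ('a \<times> 'b) set \<Rightarrow> real" where
  "bval W asg Eh = Max ((\<lambda>(i,j). real (asg i j) * W i j) ` Eh)"

text \<open>Bottleneck value B (min over the empty set is +infinity).\<close>
definition Bval :: "('a \<Rightarrow> 'b \<Rightarrow> real) \<Rightarrow> 'a set \<Rightarrow> 'b set \<Rightarrow> ('a \<times> 'b) set \<Rightarrow> ereal" where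
  "Bval W Ab Tb Eh = Inf ((\<lambda>asg. ereal (bval W asg Eh)) ` assignments Ab Tb Eh)"

definition Bset :: "('a \<Rightarrow> 'b \<Rightarrow> real) \<Rightarrow> 'a set \<Rightarrow> 'b set \<Rightarrow> ('a \<times> 'b) set \<Rightarrow> ('a \<Rightarrow> 'b \<Rightarrow> nat) set" where
  "Bset W Ab Tb Eh = {asg \<in> assignments Ab Tb Eh. ereal (bval W asg Eh) = Bval W Ab Tb Eh}"

definition Eset :: "('a \<Rightarrow> 'b \<Rightarrow> real) \<Rightarrow> 'a set \<Rightarrow> 'b set \<Rightarrow> ('a \<times> 'b) set \<Rightarrow> ('a \<times> 'b) set" where
  "Eset W Ab Tb Eh = {(i,j) \<in> Eh. ereal (W i j) = Bval W Ab Tb Eh}"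

definition bedges :: "('a \<Rightarrow> 'b \<Rightarrow> real) \<Rightarrow> 'a set \<Rightarrow> 'b set \<Rightarrow> ('a \<times> 'b) set" where
  "bedges W Ab Tb = (let Eb = Ab \<times> Tb in
     if card Eb > 1 then
       {x \<in> Eset W Ab Tb Eb. \<forall>y \<in> Eset W Ab Tb Eb.
          Bval W Ab Tb (Eb - {y}) \<le> Bval W Ab Tb (Eb - {x})}
     else Eb)"

definition rmargin :: "('a \<Rightarrow> 'b \<Rightarrow> real) \<Rightarrow> 'a set \<Rightarrow> 'b set \<Rightarrow> ereal" where
  "rmargin W Ab Tb = (let Eb = Ab \<times> Tb in
     if card Eb > 1 then
       Max ((\<lambda>(i,j). Bval W Ab Tb (Eb - {(i,j)}) - ereal (W i j)) ` Eset W Ab Tb Eb)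
     else \<infinity>)"

end

theory Submission imports Defs begin

text \<open>At stage \<open>l\<close> the optimal assignment uses the bottleneck edge \<open>(i\<^sub>l, j\<^sub>l)\<close>. Any
  other agent \<open>i'\<close> still available either starts at distance at least \<open>w\<^sub>l + \<mu>\<^sub>l\<close> from
  the goal of \<open>j\<^sub>l\<close>, or it is the agent \<open>i\<^sub>k\<close> of a later stage whose goal is at distance at
  least \<open>w\<^sub>l + \<mu>\<^sub>l\<close> from the start of \<open>i\<^sub>l\<close>: otherwise exchanging the two agents would
  give an assignment avoiding the bottleneck edge with bottleneck below \<open>w\<^sub>l + \<mu>\<^sub>l\<close>. In
  both cases the triangle inequality along start, current positions and goal, with all
  movements bounded by \<open>A\<^sub>l\<close> (the \<open>A\<^sub>k\<close> decrease in \<open>k\<close>), leaves more than \<open>s\<close> for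
  the distance between the two agents.\<close>

lemma sum_le_one_eq:
  fixes f :: "'x \<Rightarrow> nat"
  assumes "finite S" "x \<in> S" "y \<in> S" "f x = 1" "f y = 1" "sum f S \<le> 1"
  shows "x = y"
proof (rule ccontr)
  assume "x \<noteq> y"
  then have "sum f {x, y} = 2" using assms(4,5) by simp
  moreover have "sum f {x, y} \<le> sum f S" by (rule sum_mono2) (use assms(1-3) in auto)
  ultimately show False using assms(6) by simp
qed

lemma assignments_01:
  assumes "asg \<in> assignments A T E"
  shows "asg i j = 0 \<or> asg i j = 1"
  using assms unfolding assignments_def by auto

lemma assignments_column_sum:
  assumes "asg \<in> assignments A T (A \<times> T)" "j \<in> T"
  shows "(\<Sum>i\<in>A. asg i j) = 1"
  using assms unfolding assignments_def by auto

lemma assignments_row_sum: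
  assumes "asg \<in> assignments A T (A \<times> T)" "i \<in> A"
  shows "(\<Sum>j\<in>T. asg i j) \<le> 1"
  using assms unfolding assignments_def by auto

lemma assignments_remove_unused_edge:
  assumes "asg \<in> assignments A T E" "asg i0 j0 = 0" "finite E"
  shows "asg \<in> assignments A T (E - {(i0, j0)})"
proof -
  have "finite {i. (i, j) \<in> E}" for j
    by (rule finite_subset[of _ "fst ` E"]) (use assms(3) in force)+
  then have col: "(\<Sum>i\<in>{i. (i, j) \<in> E - {(i0, j0)}}. asg i j) = (\<Sum>i\<in>{i. (i, j) \<in> E}. asg i j)" for j
    by (intro sum.mono_neutral_left) (use assms(2) in auto)
  have "finite {j. (i, j) \<in> E}" for i
    by (rule finite_subset[of _ "snd ` E"]) (use assms(3) in force)+
  then have row: "(\<Sum>j\<in>{j. (i, j) \<in> E - {(i0, j0)}}. asg i j) = (\<Sum>j\<in>{j. (i, j) \<in> E}. asg i j)" for i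
    by (intro sum.mono_neutral_left) (use assms(2) in auto)
  show ?thesis using assms(1) unfolding assignments_def mem_Collect_eq col row by blast
qed

lemma assignments_swap_agents:
  assumes "asg \<in> assignments A T (A \<times> T)" "i1 \<in> A" "i2 \<in> A"
  shows "(\<lambda>i. asg (Transposition.transpose i1 i2 i)) \<in> assignments A T (A \<times> T)"
proof -
  let ?s = "Transposition.transpose i1 i2"
  have img: "?s ` A = A" using assms(2,3) by (auto simp: Transposition.transpose_def image_iff)
  have "(\<Sum>i\<in>A. asg (?s i) j) = (\<Sum>i\<in>A. asg i j)" for j
    using sum.reindex[OF inj_on_transpose, of "\<lambda>i. asg i j" i1 i2 A] img by simp
  moreover have "?s i \<in> A" if "i \<in> A" for i using that img by blast
  ultimately show ?thesis using assms(1) unfolding assignments_def by auto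
qed

lemma Bval_le_bval:
  assumes "asg \<in> assignments A T E"
  shows "Bval W A T E \<le> ereal (bval W asg E)"
  unfolding Bval_def by (rule Inf_lower) (use assms in auto)

lemma weight_le_bval:
  assumes "finite E" "(i, j) \<in> E" "asg i j = 1"
  shows "W i j \<le> bval W asg E"
proof -
  have "real (asg i j) * W i j \<le> bval W asg E"
    unfolding bval_def by (rule Max_ge) (use assms(1,2) in force)+
  then show ?thesis using assms(3) by simp
qed

lemma bval_attained:
  assumes "finite E" "E \<noteq> {}"
  obtains i j where "(i, j) \<in> E" "bval W asg E = real (asg i j) * W i j"
proof -
  have "bval W asg E \<in> (\<lambda>(i, j). real (asg i j) * W i j) ` E"
    unfolding bval_def by (rule Max_in) (use assms in auto)
  then show ?thesis using that by auto
qed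

lemma bedges_subset: "bedges W A T \<subseteq> A \<times> T"
  unfolding bedges_def Let_def Eset_def by auto

lemma bedge_weight_eq_Bval:
  assumes "card (A \<times> T) > 1" "(i0, j0) \<in> bedges W A T"
  shows "ereal (W i0 j0) = Bval W A T (A \<times> T)"
  using assms unfolding bedges_def Let_def Eset_def by auto

lemma rmargin_eq_bedge:
  assumes "finite A" "finite T" "card (A \<times> T) > 1" "(i0, j0) \<in> bedges W A T"
  shows "rmargin W A T = Bval W A T (A \<times> T - {(i0, j0)}) - ereal (W i0 j0)"
proof -
  let ?E = "A \<times> T"
  let ?f = "\<lambda>(i, j). Bval W A T (?E - {(i, j)}) - ereal (W i j)"
  have e: "(i0, j0) \<in> Eset W A T ?E"
    and best: "\<forall>y\<in>Eset W A T ?E. Bval W A T (?E - {y}) \<le> Bval W A T (?E - {(i0, j0)})"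
    using assms(3,4) unfolding bedges_def Let_def by auto
  have "finite (Eset W A T ?E)" unfolding Eset_def
    by (rule finite_subset[of _ ?E]) (use assms(1,2) in auto)
  moreover have "?f y \<le> ?f (i0, j0)" if "y \<in> Eset W A T ?E" for y
  proof -
    obtain i j where y: "y = (i, j)" by fastforce
    have "ereal (W i j) = ereal (W i0 j0)" using that e unfolding y Eset_def by auto
    then show ?thesis using best that unfolding y by (auto intro: ereal_minus_mono)
  qed
  ultimately have "Max (?f ` Eset W A T ?E) = ?f (i0, j0)"
    using e by (intro Max_eqI) auto
  then show ?thesis using assms(3) unfolding rmargin_def Let_def by simp
qed

lemma assignment_avoiding_bedge:
  assumes "finite A" "finite T" "card (A \<times> T) > 1" "(i0, j0) \<in> bedges W A T"
    and "0 < rmargin W A T" "0 \<le> W i0 j0"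
    and "asg \<in> assignments A T (A \<times> T)" "asg i0 j0 = 0"
  obtains i j where "(i, j) \<in> A \<times> T - {(i0, j0)}" "asg i j = 1"
    "ereal (W i0 j0) + rmargin W A T \<le> ereal (W i j)"
proof -
  let ?E = "A \<times> T - {(i0, j0)}"
  have "?E \<noteq> {}"
  proof
    assume "?E = {}"
    then have "card (A \<times> T) \<le> card {(i0, j0)}" by (intro card_mono) auto
    then show False using assms(3) by simp
  qed
  moreover have fin: "finite (A \<times> T)" using assms(1,2) by simp
  ultimately obtain i j where ij: "(i, j) \<in> ?E" and b: "bval W asg ?E = real (asg i j) * W i j"
    using bval_attained[of ?E] by blast
  have "asg \<in> assignments A T ?E"
    using assignments_remove_unused_edge[OF assms(7,8) fin] .
  then have "Bval W A T ?E \<le> ereal (real (asg i j) * W i j)"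
    unfolding b[symmetric] by (rule Bval_le_bval)
  moreover have "ereal (W i0 j0) + rmargin W A T = Bval W A T ?E"
    using rmargin_eq_bedge[OF assms(1-4)] by (cases "Bval W A T ?E") auto
  ultimately have le: "ereal (W i0 j0) + rmargin W A T \<le> ereal (real (asg i j) * W i j)"
    by simp
  have "asg i j \<noteq> 0"
  proof
    assume "asg i j = 0"
    then have "ereal (W i0 j0) + rmargin W A T \<le> 0" using le by (simp add: zero_ereal_def)
    then show False using assms(5,6) by (cases "rmargin W A T") auto
  qed
  then have "asg i j = 1" using assignments_01[OF assms(7), of i j] by simp
  then show thesis using that ij le by simp
qed

lemma bedge_assigned:
  assumes "finite A" "finite T" "(i0, j0) \<in> bedges W A T"
    and "0 < rmargin W A T" "0 \<le> W i0 j0" "asg \<in> Bset W A T (A \<times> T)"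
  shows "asg i0 j0 = 1"
proof -
  have asg: "asg \<in> assignments A T (A \<times> T)"
    and opt: "ereal (bval W asg (A \<times> T)) = Bval W A T (A \<times> T)"
    using assms(6) unfolding Bset_def by auto
  have e: "(i0, j0) \<in> A \<times> T" using assms(3) bedges_subset by blast
  show ?thesis
  proof (cases "card (A \<times> T) > 1")
    case True
    show ?thesis
    proof (rule ccontr)
      assume "asg i0 j0 \<noteq> 1"
      then have "asg i0 j0 = 0" using assignments_01[OF asg] by blast
      then obtain i j where ij: "(i, j) \<in> A \<times> T" "asg i j = 1"
        and far: "ereal (W i0 j0) + rmargin W A T \<le> ereal (W i j)"
        using assignment_avoiding_bedge[OF assms(1,2) True assms(3-5) asg] by blast
      have "W i j \<le> bval W asg (A \<times> T)"
        using weight_le_bval[of "A \<times> T" i j asg W] ij assms(1,2) by simp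
      also have "\<dots> = W i0 j0"
        using opt bedge_weight_eq_Bval[OF True assms(3)] by (metis ereal.inject)
      finally have "W i j \<le> W i0 j0" .
      then show False using far assms(4) by (cases "rmargin W A T") auto
    qed
  next
    case False
    then have "A \<times> T = {(i0, j0)}"
      using e card_le_Suc0_iff_eq[of "A \<times> T"] assms(1,2) by auto
    then have "A = {i0}" "j0 \<in> T" by auto
    then show ?thesis using assignments_column_sum[OF asg] by simp
  qed
qed

text \<open>Swapping the rows of \<open>i0\<close> and \<open>i'\<close> in an optimal assignment gives one that avoids
  the bottleneck edge, so by the margin it uses an edge of weight at least
  \<open>W i0 j0 + rmargin\<close>; the only candidates are the two swapped edges.\<close>

lemma bedge_margin_dichotomy:
  assumes "finite A" "finite T" "(i0, j0) \<in> bedges W A T"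
    and "0 < rmargin W A T" "0 \<le> W i0 j0" "asg \<in> Bset W A T (A \<times> T)"
    and "i' \<in> A" "i' \<noteq> i0"
  shows "ereal (W i0 j0) + rmargin W A T \<le> ereal (W i' j0)
    \<or> (\<exists>j\<in>T. asg i' j = 1 \<and> ereal (W i0 j0) + rmargin W A T \<le> ereal (W i0 j))"
proof -
  let ?r = "rmargin W A T"
  have asg: "asg \<in> assignments A T (A \<times> T)"
    and opt: "ereal (bval W asg (A \<times> T)) = Bval W A T (A \<times> T)"
    using assms(6) unfolding Bset_def by auto
  have i0: "i0 \<in> A" and j0: "j0 \<in> T" using assms(3) bedges_subset by blast+
  have diag: "asg i0 j0 = 1" by (rule bedge_assigned[OF assms(1-6)])
  have "card {(i0, j0), (i', j0)} \<le> card (A \<times> T)"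
    using assms(1,2,7) i0 j0 by (intro card_mono) auto
  then have card: "card (A \<times> T) > 1" using assms(8) by simp
  have "asg i' j0 \<noteq> 1"
    using sum_le_one_eq[OF assms(1) i0 assms(7), of "\<lambda>i. asg i j0"] diag assms(8)
      assignments_column_sum[OF asg j0] by auto
  then have "asg i' j0 = 0" using assignments_01[OF asg, of i' j0] by simp
  moreover define swapped where "swapped = (\<lambda>i. asg (Transposition.transpose i0 i' i))"
  ultimately have "swapped i0 j0 = 0" by simp
  then obtain i j where ij: "(i, j) \<in> A \<times> T" and one: "swapped i j = 1"
    and far: "ereal (W i0 j0) + ?r \<le> ereal (W i j)"
    using assignment_avoiding_bedge[OF assms(1,2) card assms(3-5)]
      assignments_swap_agents[OF asg i0 assms(7)] unfolding swapped_def by blast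
  consider "i = i0" | "i = i'" | "i \<noteq> i0" "i \<noteq> i'" by blast
  then show ?thesis
  proof cases
    case 1
    then show ?thesis using one far ij unfolding swapped_def by auto
  next
    case 2
    then have "asg i0 j = 1" using one unfolding swapped_def by simp
    then have "j = j0"
      using sum_le_one_eq[OF assms(2), of j j0 "asg i0"] ij j0 diag
        assignments_row_sum[OF asg i0] by simp
    then show ?thesis using far 2 by simp
  next
    case 3
    then have "asg i j = 1" using one unfolding swapped_def by simp
    then have "W i j \<le> bval W asg (A \<times> T)"
      using weight_le_bval[of "A \<times> T" i j asg W] ij assms(1,2) by simp
    also have "\<dots> = W i0 j0"
      using opt bedge_weight_eq_Bval[OF card assms(3)] by (metis ereal.inject)
    finally show ?thesis using far assms(4) by (cases ?r) auto
  qed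
qed

lemma inj_on_sequential_choice:
  fixes f :: "nat \<Rightarrow> 'a"
  assumes "\<forall>k\<in>{1..n}. f k \<notin> f ` {1..<k}"
  shows "inj_on f {1..n}"
proof (rule inj_onI, rule ccontr)
  fix k l assume k: "k \<in> {1..n}" and l: "l \<in> {1..n}" and eq: "f k = f l" and "k \<noteq> l"
  have no_earlier: "\<not> (a < b)" if "a \<in> {1..n}" "b \<in> {1..n}" "f a = f b" for a b
  proof
    assume "a < b"
    then have "f b \<in> f ` {1..<b}" using that by (auto intro: image_eqI[of _ _ a])
    then show False using assms that(2) by blast
  qed
  from no_earlier[OF k l eq] no_earlier[OF l k eq[symmetric]] \<open>k \<noteq> l\<close> show False
    by linarith
qed

lemma sequential_bottleneck_margin:
  fixes W :: "'a \<Rightarrow> 'b \<Rightarrow> real"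
  assumes "finite A" "finite T" "n = card T"
    and Abar_def: "Abar = (\<lambda>k. A - ist ` {1..<k})"
    and Tbar_def: "Tbar = (\<lambda>k. T - jst ` {1..<k})"
    and bedge: "\<forall>k\<in>{1..n}. (ist k, jst k) \<in> bedges W (Abar k) (Tbar k)"
    and pos: "\<forall>k\<in>{1..n}. 0 < rmargin W (Abar k) (Tbar k)"
    and opt: "\<forall>k\<in>{1..n}. PiS \<in> Bset W (Abar k) (Tbar k) (Abar k \<times> Tbar k)"
    and W_nonneg: "\<forall>i j. 0 \<le> W i j"
    and l: "l \<in> {1..n}" and i': "i' \<in> Abar l" "i' \<noteq> ist l"
  shows "ereal (W (ist l) (jst l)) + rmargin W (Abar l) (Tbar l) \<le> ereal (W i' (jst l))
    \<or> (\<exists>k\<in>{l<..n}. i' = ist k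
          \<and> ereal (W (ist l) (jst l)) + rmargin W (Abar l) (Tbar l) \<le> ereal (W (ist l) (jst k)))"
  (is "?near \<or> ?later")
proof -
  let ?r = "rmargin W (Abar l) (Tbar l)"
  have fin: "finite (Abar k)" "finite (Tbar k)" for k
    using assms(1,2) unfolding Abar_def Tbar_def by auto
  have chosen: "ist k \<in> Abar k" "jst k \<in> Tbar k" if "k \<in> {1..n}" for k
    using bedge bedges_subset that by blast+
  have assigned: "PiS (ist k) (jst k) = 1" if "k \<in> {1..n}" for k
    using bedge_assigned[OF fin] bedge pos opt W_nonneg that by blast
  have "jst ` {1..n} \<subseteq> T" and "card (jst ` {1..n}) = n"
    using chosen(2) inj_on_sequential_choice[of n jst] card_image[of jst "{1..n}"]
    unfolding Tbar_def by auto
  then have T_eq: "T = jst ` {1..n}" using card_subset_eq assms(2,3) by metis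
  have "?near \<or> (\<exists>j\<in>Tbar l. PiS i' j = 1 \<and> ereal (W (ist l) (jst l)) + ?r \<le> ereal (W (ist l) j))"
    using bedge_margin_dichotomy[OF fin bedge[rule_format, OF l] pos[rule_format, OF l]
        W_nonneg[rule_format] opt[rule_format, OF l] i'] .
  moreover have ?later
    if j: "j \<in> Tbar l" "PiS i' j = 1" and far: "ereal (W (ist l) (jst l)) + ?r \<le> ereal (W (ist l) j)"
    for j
  proof -
    have "W (ist l) (jst l) < W (ist l) j" using far pos[rule_format, OF l] by (cases ?r) auto
    then have "j \<noteq> jst l" by auto
    obtain k where k: "k \<in> {1..n}" "j = jst k"
      using j(1) T_eq unfolding Tbar_def by blast
    have "k \<notin> {1..<l}" using j(1) k(2) unfolding Tbar_def by auto
    moreover have "k \<noteq> l" using k(2) \<open>j \<noteq> jst l\<close> by auto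
    ultimately have "l < k" using k(1) by auto
    then have "ist k \<in> Abar l" using chosen(1)[OF k(1)] unfolding Abar_def by auto
    then have "i' = ist k"
      using sum_le_one_eq[OF fin(1) i'(1), of "ist k" "\<lambda>i. PiS i j"] j assigned[OF k(1)] k(2)
        assignments_column_sum[of PiS "Abar l" "Tbar l" j] opt l unfolding Bset_def by auto
    then show ?later using \<open>l < k\<close> k far by auto
  qed
  ultimately show ?thesis by blast
qed

lemma separation_by_detour:
  fixes d :: "'p \<Rightarrow> 'p \<Rightarrow> real"
  assumes tri: "\<forall>x y z. d x z \<le> d x y + d y z"
    and "L \<le> d x g" "d x y < \<alpha>" "d z g < \<beta>" "\<alpha> + \<beta> + s \<le> L"
  shows "s < d y z"
proof -
  have "d x g \<le> d x y + d y z + d z g"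
    using tri[rule_format, of x g y] tri[rule_format, of y g z] by linarith
  then show ?thesis using assms(2-5) by linarith
qed

locale sequential_bottleneck_motion =
  fixes Ag :: "'a set" and Tk :: "'b set"
    and d :: "'p \<Rightarrow> 'p \<Rightarrow> real"
    and p :: "'a \<Rightarrow> real \<Rightarrow> 'p" and g :: "'b \<Rightarrow> 'p"
    and ss :: "'a \<Rightarrow> 'a \<Rightarrow> real" and T :: real
    and ist :: "nat \<Rightarrow> 'a" and jst :: "nat \<Rightarrow> 'b" and mu :: "nat \<Rightarrow> ereal"
    and PiS :: "'a \<Rightarrow> 'b \<Rightarrow> nat"
    and s :: real and a :: "real \<Rightarrow> real"
    and n :: nat and W :: "'a \<Rightarrow> 'b \<Rightarrow> real"
    and Abar :: "nat \<Rightarrow> 'a set" and Tbar :: "nat \<Rightarrow> 'b set"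
    and \<mu> :: ereal and Ak :: "nat \<Rightarrow> ereal"
  assumes n_def: "n = card Tk"
    and W_def: "W = (\<lambda>i j. d (p i 0) (g j))"
    and Abar_def: "Abar = (\<lambda>k. Ag - ist ` {1..<k})"
    and Tbar_def: "Tbar = (\<lambda>k. Tk - jst ` {1..<k})"
    and mu_min_def: "\<mu> = Min (mu ` {1..n})"
    and Ak_def: "Ak = (\<lambda>k. Min ((\<lambda>l. ereal (W (ist l) (jst l)) + mu l) ` {1..k}) - (\<mu> + ereal s) / 2)"
    and finA: "finite Ag" and finT: "finite Tk"
    and m_gt1: "card Ag > 1"
    and d_nonneg: "\<forall>x y. d x y \<ge> 0"
    and d_sym: "\<forall>x y. d x y = d y x"
    and d_tri: "\<forall>x y z. d x z \<le> d x y + d y z"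
    and ss_nonneg: "\<forall>i i'. i \<noteq> i' \<longrightarrow> ss i i' \<ge> 0"
    and seq: "\<forall>k\<in>{1..n}. (ist k, jst k) \<in> bedges W (Abar k) (Tbar k)
                        \<and> mu k = rmargin W (Abar k) (Tbar k)"
    and PiS_opt: "\<forall>k\<in>{1..n}. PiS \<in> Bset W (Abar k) (Tbar k) (Abar k \<times> Tbar k)"
    and s_ge: "\<forall>i\<in>Ag. \<forall>i'\<in>Ag. i \<noteq> i' \<longrightarrow> ss i i' \<le> s"
    and s_lt: "ereal s < \<mu>"
    and a_ge: "\<forall>t\<in>{0..T}. ereal (a t) \<ge> (\<mu> - ereal s) / 2"
    and move_assigned: "\<forall>k\<in>{1..n}. \<forall>t\<in>{0..T}.
          ereal (d (p (ist k) 0) (p (ist k) t)) < min (ereal (a t)) (Ak k)"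
    and move_other: "\<forall>i\<in>Ag - ist ` {1..n}. \<forall>t\<in>{0..T}.
          ereal (d (p i 0) (p i t)) < min (ereal (a t)) (Ak n)"
    and goal_dist: "\<forall>k\<in>{1..n}. \<forall>t\<in>{0..T}.
          ereal (d (p (ist k) t) (g (jst k)))
            < Ak k - min (ereal (a t)) (Ak k) + (\<mu> - ereal s) / 2"
begin

lemma s_nonneg: "0 \<le> s"
proof -
  obtain i i' where "i \<in> Ag" "i' \<in> Ag" "i \<noteq> i'"
    using m_gt1 card_le_Suc0_iff_eq[OF finA] by (metis One_nat_def not_less)
  then show ?thesis using ss_nonneg s_ge by (meson order_trans)
qed

lemma mu_finite:
  assumes "t \<in> {0..T}"
  obtains mr where "\<mu> = ereal mr"
  using s_lt a_ge assms by (cases \<mu>) auto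

lemma mu_le: "l \<in> {1..n} \<Longrightarrow> \<mu> \<le> mu l"
  unfolding mu_min_def by (rule Min_le) auto

lemma mu_pos:
  assumes "l \<in> {1..n}"
  shows "0 < mu l"
proof -
  have "ereal 0 \<le> ereal s" using s_nonneg by simp
  also have "\<dots> < \<mu>" by (rule s_lt)
  also have "\<dots> \<le> mu l" using mu_le assms by blast
  finally show ?thesis by (simp add: zero_ereal_def)
qed

lemma chosen_available: "l \<in> {1..n} \<Longrightarrow> ist l \<in> Abar l"
  using seq bedges_subset by blast

lemma Abar_antimono: "l \<le> k \<Longrightarrow> Abar k \<subseteq> Abar l"
  unfolding Abar_def by auto

lemma stage_margin:
  assumes "l \<in> {1..n}" "i' \<in> Abar l" "i' \<noteq> ist l"
  shows "ereal (W (ist l) (jst l)) + mu l \<le> ereal (W i' (jst l))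
    \<or> (\<exists>k\<in>{l<..n}. i' = ist k \<and> ereal (W (ist l) (jst l)) + mu l \<le> ereal (W (ist l) (jst k)))"
proof -
  have "\<forall>k\<in>{1..n}. 0 < rmargin W (Abar k) (Tbar k)" using seq mu_pos by auto
  moreover have "\<forall>i j. 0 \<le> W i j" using d_nonneg unfolding W_def by simp
  ultimately show ?thesis
    using sequential_bottleneck_margin[OF finA finT n_def Abar_def Tbar_def _ _ PiS_opt _ assms]
      seq assms(1) by auto
qed

lemma budget_antimono:
  assumes "1 \<le> l" "l \<le> k"
  shows "Ak k \<le> Ak l"
  unfolding Ak_def by (intro ereal_minus_mono Min_antimono) (use assms in auto)

lemma budget_le_margin:
  assumes "l \<in> {1..n}"
  shows "Ak l \<le> ereal (W (ist l) (jst l)) + mu l - (\<mu> + ereal s) / 2"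
  unfolding Ak_def by (intro ereal_minus_mono Min_le) (use assms in auto)

lemma budget_lower:
  assumes "\<mu> = ereal mr" "k \<in> {1..n}"
  shows "ereal ((mr - s) / 2) \<le> Ak k"
proof -
  have "ereal mr \<le> ereal (W (ist l) (jst l)) + mu l" if "l \<in> {1..k}" for l
  proof -
    have "ereal mr \<le> mu l" using mu_le assms that by auto
    moreover have "0 \<le> W (ist l) (jst l)" using d_nonneg unfolding W_def by simp
    ultimately show ?thesis by (simp add: add_increasing)
  qed
  then have "ereal mr \<le> Min ((\<lambda>l. ereal (W (ist l) (jst l)) + mu l) ` {1..k})"
    using assms(2) by (subst Min_ge_iff) auto
  then have "ereal mr - ereal ((mr + s) / 2) \<le> Ak k"
    unfolding Ak_def assms(1) by (intro ereal_minus_mono) auto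
  then show ?thesis by (simp add: field_simps)
qed

lemma movement_within_budget:
  assumes "t \<in> {0..T}" "l \<in> {1..n}" "i \<in> Abar l"
  shows "ereal (d (p i 0) (p i t)) < min (ereal (a t)) (Ak l)"
proof (cases "i \<in> ist ` {1..n}")
  case True
  then obtain k where k: "k \<in> {1..n}" "i = ist k" by blast
  then have "k \<notin> {1..<l}" using assms(3) unfolding Abar_def by auto
  then have "Ak k \<le> Ak l" using budget_antimono assms(2) k(1) by auto
  then have "min (ereal (a t)) (Ak k) \<le> min (ereal (a t)) (Ak l)" by (rule min.mono[OF order_refl])
  then show ?thesis
    using move_assigned[rule_format, OF k(1) assms(1)] k(2) by (meson less_le_trans)
next
  case False
  then have "i \<in> Ag - ist ` {1..n}" using assms(3) unfolding Abar_def by auto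
  moreover have "Ak n \<le> Ak l" using budget_antimono assms(2) by auto
  then have "min (ereal (a t)) (Ak n) \<le> min (ereal (a t)) (Ak l)" by (rule min.mono[OF order_refl])
  ultimately show ?thesis using move_other[rule_format, OF _ assms(1)] by (meson less_le_trans)
qed

text \<open>The offset \<open>(\<mu> + s) / 2\<close> in \<open>Ak\<close> is chosen so that a detour bounded by the budgets
  falls short of the margin \<open>w\<^sub>l + \<mu>\<^sub>l\<close> by more than \<open>s\<close>.\<close>

lemma stage_pair_separated:
  assumes t: "t \<in> {0..T}" and l: "l \<in> {1..n}" and i': "i' \<in> Abar l" "i' \<noteq> ist l"
  shows "s < d (p (ist l) t) (p i' t)"
proof -
  obtain mr where mr: "\<mu> = ereal mr" using mu_finite[OF t] .
  let ?il = "ist l" and ?jl = "jst l"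
  let ?w = "W ?il ?jl"
  have W_eq: "W i j = d (p i 0) (g j)" for i j unfolding W_def by simp
  have margin: "ereal ?w + mu l \<le> ereal (W i' ?jl)
    \<or> (\<exists>k\<in>{l<..n}. i' = ist k \<and> ereal ?w + mu l \<le> ereal (W ?il (jst k)))"
    by (rule stage_margin[OF l i'])
  then obtain ml where ml: "mu l = ereal ml" using mu_pos[OF l] by (cases "mu l") auto
  have "Ak l \<le> ereal (?w + ml - (mr + s) / 2)" using budget_le_margin[OF l] ml mr by simp
  moreover have "ereal ((mr - s) / 2) \<le> Ak l" by (rule budget_lower[OF mr l])
  ultimately obtain Al where Al: "Ak l = ereal Al" and Al_le: "Al + (mr - s) / 2 + s \<le> ?w + ml"
    by (cases "Ak l") (auto simp: field_simps)
  have goal_real: "d (p (ist k) t) (g (jst k)) < A - min (a t) A + (mr - s) / 2"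
    if "k \<in> {1..n}" "Ak k = ereal A" for k A
    using goal_dist[rule_format, OF that(1) t] that(2) mr by (simp flip: ereal_min)
  have move_real: "d (p i 0) (p i t) < min (a t) Al" if "i \<in> Abar l" for i
    using movement_within_budget[OF t l that] Al by (simp flip: ereal_min)
  from margin show ?thesis
  proof
    assume "ereal ?w + mu l \<le> ereal (W i' ?jl)"
    then have "?w + ml \<le> d (p i' 0) (g ?jl)" using ml W_eq by simp
    then have "s < d (p i' t) (p ?il t)"
      by (rule separation_by_detour[OF d_tri _ move_real[OF i'(1)] goal_real[OF l Al]])
        (use Al_le in linarith)
    then show ?thesis using d_sym by metis
  next
    assume "\<exists>k\<in>{l<..n}. i' = ist k \<and> ereal ?w + mu l \<le> ereal (W ?il (jst k))"
    then obtain k where k: "k \<in> {1..n}" "l < k" "i' = ist k"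
      and far: "?w + ml \<le> d (p ?il 0) (g (jst k))"
      using ml W_eq l by auto
    have "Ak k \<le> ereal Al" using budget_antimono[of l k] l k(2) Al by auto
    moreover have "ereal ((mr - s) / 2) \<le> Ak k" by (rule budget_lower[OF mr k(1)])
    ultimately obtain Ak' where Ak': "Ak k = ereal Ak'" "Ak' \<le> Al" by (cases "Ak k") auto
    then have "min (a t) Al + (Ak' - min (a t) Ak') \<le> Al" by (simp add: min_def)
    then have "s < d (p ?il t) (p (ist k) t)"
      by (intro separation_by_detour[OF d_tri far move_real[OF chosen_available[OF l]]
          goal_real[OF k(1) Ak'(1)]]) (use Al_le in linarith)
    then show ?thesis using k(3) by simp
  qed
qed

lemma no_collision:
  assumes "k \<in> {1..n}" "i' \<in> Ag - {ist k}" "t \<in> {0..T}"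
  shows "ss (ist k) i' < d (p (ist k) t) (p i' t)"
proof -
  have "ist k \<in> Ag" using chosen_available[OF assms(1)] unfolding Abar_def by blast
  then have "ss (ist k) i' \<le> s" using s_ge assms(2) by auto
  moreover have "s < d (p (ist k) t) (p i' t)"
  proof (cases "i' \<in> Abar k")
    case True
    then show ?thesis using stage_pair_separated[OF assms(3,1)] assms(2) by blast
  next
    case False
    then obtain m where m: "m \<in> {1..<k}" "i' = ist m"
      using assms(2) unfolding Abar_def by blast
    then have m_n: "m \<in> {1..n}" and "ist k \<in> Abar m"
      using assms(1) chosen_available[OF assms(1)] Abar_antimono[of m k] by auto
    then have "s < d (p i' t) (p (ist k) t)"
      using stage_pair_separated[OF assms(3) m_n] assms(2) m(2) by auto
    then show ?thesis using d_sym by metis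
  qed
  ultimately show ?thesis by linarith
qed

end

theorem theorem1:
  fixes Ag :: "'a set" and Tk :: "'b set"
    and d :: "real^'n \<Rightarrow> real^'n \<Rightarrow> real"
    and p :: "'a \<Rightarrow> real \<Rightarrow> real^'n" and g :: "'b \<Rightarrow> real^'n"
    and ss :: "'a \<Rightarrow> 'a \<Rightarrow> real" and T :: real
    and ist :: "nat \<Rightarrow> 'a" and jst :: "nat \<Rightarrow> 'b" and mu :: "nat \<Rightarrow> ereal"
    and PiS :: "'a \<Rightarrow> 'b \<Rightarrow> nat"
    and s :: real and a :: "real \<Rightarrow> real"
    and n :: nat and W :: "'a \<Rightarrow> 'b \<Rightarrow> real"
    and Abar :: "nat \<Rightarrow> 'a set" and Tbar :: "nat \<Rightarrow> 'b set"
    and \<mu> :: ereal and Ak :: "nat \<Rightarrow> ereal"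
  assumes n_def: "n = card Tk"
    and W_def: "W = (\<lambda>i j. d (p i 0) (g j))"
    and Abar_def: "Abar = (\<lambda>k. Ag - ist ` {1..<k})"
    and Tbar_def: "Tbar = (\<lambda>k. Tk - jst ` {1..<k})"
    and mu_min_def: "\<mu> = Min (mu ` {1..n})"
    and Ak_def: "Ak = (\<lambda>k. Min ((\<lambda>l. ereal (W (ist l) (jst l)) + mu l) ` {1..k}) - (\<mu> + ereal s) / 2)"
    and finA: "finite Ag" and finT: "finite Tk"
    and m_gt1: "card Ag > 1" and n_le: "card Tk \<le> card Ag" and n_ge1: "card Tk \<ge> 1"
    and d_nonneg: "\<forall>x y. d x y \<ge> 0"
    and d_sym: "\<forall>x y. d x y = d y x"
    and d_tri: "\<forall>x y z. d x z \<le> d x y + d y z"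
    and ss_sym: "\<forall>i i'. i \<noteq> i' \<longrightarrow> ss i i' = ss i' i"
    and ss_nonneg: "\<forall>i i'. i \<noteq> i' \<longrightarrow> ss i i' \<ge> 0"
    and seq: "\<forall>k\<in>{1..n}. (ist k, jst k) \<in> bedges W (Abar k) (Tbar k)
                        \<and> mu k = rmargin W (Abar k) (Tbar k)"
    and PiS_opt: "\<forall>k\<in>{1..n}. PiS \<in> Bset W (Abar k) (Tbar k) (Abar k \<times> Tbar k)"
    and s_ge: "\<forall>i\<in>Ag. \<forall>i'\<in>Ag. i \<noteq> i' \<longrightarrow> ss i i' \<le> s"
    and s_lt: "ereal s < \<mu>"
    and a_ge: "\<forall>t\<in>{0..T}. ereal (a t) \<ge> (\<mu> - ereal s) / 2"
    and move_assigned: "\<forall>k\<in>{1..n}. \<forall>t\<in>{0..T}.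
          ereal (d (p (ist k) 0) (p (ist k) t)) < min (ereal (a t)) (Ak k)"
    and move_other: "\<forall>i\<in>Ag - ist ` {1..n}. \<forall>t\<in>{0..T}.
          ereal (d (p i 0) (p i t)) < min (ereal (a t)) (Ak n)"
    and goal_dist: "\<forall>k\<in>{1..n}. \<forall>t\<in>{0..T}.
          ereal (d (p (ist k) t) (g (jst k)))
            < Ak k - min (ereal (a t)) (Ak k) + (\<mu> - ereal s) / 2"
  shows "\<forall>k\<in>{1..n}. \<forall>i'\<in>Ag - {ist k}. \<forall>t\<in>{0..T}.
           d (p (ist k) t) (p i' t) > ss (ist k) i'"
proof -
  interpret sequential_bottleneck_motion Ag Tk d p g ss T ist jst mu PiS s a n W Abar Tbar \<mu> Ak
    using n_def W_def Abar_def Tbar_def mu_min_def Ak_def finA finT m_gt1 d_nonneg d_sym d_tri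
      ss_nonneg seq PiS_opt s_ge s_lt a_ge move_assigned move_other goal_dist
    by unfold_locales
  show ?thesis using no_collision by blast
qed

end
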